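(* Assume problem (P$_{\mathrm{fin}}$) has an optimal solution. Then there exist an optimal solution $\{p_{k,i},\delta_{k,i}\}$ of (P$_{\mathrm{fin}}$) and nonnegative numbers $\gamma_{k,i},\epsilon_{k,i}$ with $\delta_{k,i}=\gamma_{k,i}+\epsilon_{k,i}$ such that $\{p_{k,i},\gamma_{k,i},\epsilon_{k,i}\}$ is a partially procrastinating policy.
   Context: Two-way channel with finite batteries. There are two nodes $T_1,T_2$, $N$ unit-length slots, channel gains $h_1,h_2>0$, noise powers $\sigma_1^2,\sigma_2^2>0$, efficiencies $\alpha_1,\alpha_2\in[0,1]$, harvested energies $E_{k,i}\ge0$, and battery capacities $E_k^{\max}\in(0,\infty)$. A power policy is $\{p_{k,i},\delta_{k,i}\}$. Here $p_{k,i}\ge0$ is the transmit power of $T_k$ in slot $i$, and $\delta_{k,i}\ge0$ is the energy sent from $T_k$ to $T_j$ ($j\neq k$), of which $\alpha_k\delta_{k,i}$ is received. The battery state is $$S_{k,i}=\sum_{n=1}^i(E_{k,n}-p_{k,n}+\alpha_j\delta_{j,n}-\delta_{k,n}).$$ Let $$C(p_1,p_2)=\tfrac12\log(1+h_1p_1/\sigma_2^2)+\tfrac12\log(1+h_2p_2/\sigma_1^2).$$ Problem (P$_{\mathrm{fin}}$) is to maximize $\sum_{i=1}^N C(p_{1,i},p_{2,i})$ subject to $0\le S_{k,i}\le E_k^{\max}$, $p_{k,i}\ge0$ and $\delta_{k,i}\ge0$ for all $k=1,2$ and $i=1,\dots,N$. A policy $\{p_{k,i},\gamma_{k,i},\epsilon_{k,i}\}$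 with $\gamma_{k,i},\epsilon_{k,i}\ge0$, with transfers $\delta_{k,i}=\gamma_{k,i}+\epsilon_{k,i}$ and $S_{k,i}$ computed from these $\delta_{k,i}$, is called partially procrastinating if for all $k,j\in\{1,2\}$, $j\ne k$, and $i=1,\dots,N$: - $p_{k,i}-\alpha_j\gamma_{j,i}\ge0$; - $\gamma_{1,i}\gamma_{2,i}=0$; - $\epsilon_{k,i}(E_k^{\max}-S_{k,i})=0$. *)

theory Defs
  imports Complex_Main
begin

text \<open>Nodes are indexed by k \<in> {1,2}, slots by i \<in> {1..N}.
  Node-indexed parameters are functions nat \<Rightarrow> real; policies are functions nat \<Rightarrow> nat \<Rightarrow> real
  (first argument node k, second argument slot i). Only values at k \<in> {1,2}, i \<in> {1..N}
  matter.\<close>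

definition other :: "nat \<Rightarrow> nat" where
  "other k = (if k = 1 then 2 else 1)"

text \<open>Rate function C(p1,p2); sigma k is the noise standard deviation at node k.\<close>
definition rate :: "(nat \<Rightarrow> real) \<Rightarrow> (nat \<Rightarrow> real) \<Rightarrow> real \<Rightarrow> real \<Rightarrow> real" where
  "rate h sigma p1 p2 =
     (1/2) * ln (1 + h 1 * p1 / (sigma 2)^2) + (1/2) * ln (1 + h 2 * p2 / (sigma 1)^2)"

definition battery ::
  "(nat \<Rightarrow> real) \<Rightarrow> (nat \<Rightarrow> nat \<Rightarrow> real) \<Rightarrow> (nat \<Rightarrow> nat \<Rightarrow> real) \<Rightarrow> (nat \<Rightarrow> nat \<Rightarrow> real)
     \<Rightarrow> nat \<Rightarrow> nat \<Rightarrow> real" where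
  "battery alpha E p delta k i =
     (\<Sum>n = 1..i. E k n - p k n + alpha (other k) * delta (other k) n - delta k n)"

definition feasible ::
  "nat \<Rightarrow> (nat \<Rightarrow> real) \<Rightarrow> (nat \<Rightarrow> nat \<Rightarrow> real) \<Rightarrow> (nat \<Rightarrow> real)
     \<Rightarrow> (nat \<Rightarrow> nat \<Rightarrow> real) \<Rightarrow> (nat \<Rightarrow> nat \<Rightarrow> real) \<Rightarrow> bool" where
  "feasible N alpha E Emax p delta \<longleftrightarrow>
     (\<forall>k \<in> {1,2}. \<forall>i \<in> {1..N}.
        0 \<le> battery alpha E p delta k i \<and> battery alpha E p delta k i \<le> Emax k \<and>
        0 \<le> p k i \<and> 0 \<le> delta k i)"

definition objective ::
  "nat \<Rightarrow> (nat \<Rightarrow> real) \<Rightarrow> (nat \<Rightarrow> real) \<Rightarrow> (nat \<Rightarrow> nat \<Rightarrow> real) \<Rightarrow> real" where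
  "objective N h sigma p = (\<Sum>i = 1..N. rate h sigma (p 1 i) (p 2 i))"

definition optimal ::
  "nat \<Rightarrow> (nat \<Rightarrow> real) \<Rightarrow> (nat \<Rightarrow> real) \<Rightarrow> (nat \<Rightarrow> real) \<Rightarrow> (nat \<Rightarrow> nat \<Rightarrow> real)
     \<Rightarrow> (nat \<Rightarrow> real) \<Rightarrow> (nat \<Rightarrow> nat \<Rightarrow> real) \<Rightarrow> (nat \<Rightarrow> nat \<Rightarrow> real) \<Rightarrow> bool" where
  "optimal N h sigma alpha E Emax p delta \<longleftrightarrow>
     feasible N alpha E Emax p delta \<and>
     (\<forall>p' delta'. feasible N alpha E Emax p' delta' \<longrightarrow>
        objective N h sigma p' \<le> objective N h sigma p)"

definition partially_procrastinating ::
  "nat \<Rightarrow> (nat \<Rightarrow> real) \<Rightarrow> (nat \<Rightarrow> nat \<Rightarrow> real) \<Rightarrow> (nat \<Rightarrow> real)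
     \<Rightarrow> (nat \<Rightarrow> nat \<Rightarrow> real) \<Rightarrow> (nat \<Rightarrow> nat \<Rightarrow> real) \<Rightarrow> (nat \<Rightarrow> nat \<Rightarrow> real) \<Rightarrow> bool" where
  "partially_procrastinating N alpha E Emax p gamma eps \<longleftrightarrow>
     (\<forall>k \<in> {1,2}. \<forall>i \<in> {1..N}.
        0 \<le> gamma k i \<and> 0 \<le> eps k i \<and>
        p k i - alpha (other k) * gamma (other k) i \<ge> 0 \<and>
        gamma 1 i * gamma 2 i = 0 \<and>
        eps k i * (Emax k - battery alpha E p (\<lambda>k' i'. gamma k' i' + eps k' i') k i) = 0)"

end

theory Submission
  imports Defs "HOL-Library.Product_Plus" "HOL-Library.Product_Order"
begin

(* Keep the transmit powers of an optimal policy and rebuild its energy transfers lazily, slot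
   by slot: a node sends energy (gamma) only to cover the other node's deficit left after
   harvesting and transmitting, and spills energy (epsilon) only when a battery would overflow.
   The new battery levels dominate those of the original policy: the original levels can still
   be reached from them by further nonnegative transfers, and with lossless transfers both carry
   the same total energy.  This invariant keeps the new levels nonnegative and lets the spilling
   step fit them under the capacities.  The objective depends on the powers only, so the new
   policy is optimal as well. *)

section \<open>Lossy transfers between two batteries\<close>

definition transfer :: "real \<Rightarrow> real \<Rightarrow> real \<times> real \<Rightarrow> real \<times> real \<Rightarrow> real \<times> real" where
  "transfer a1 a2 x d = (fst x - fst d + a2 * snd d, snd x - snd d + a1 * fst d)"

definition covers :: "real \<Rightarrow> real \<Rightarrow> real \<times> real \<Rightarrow> real \<times> real \<Rightarrow> bool" where
  "covers a1 a2 x s \<longleftrightarrow> (\<exists>w \<ge> 0. s \<le> transfer a1 a2 x w)"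

lemma nonneg_prod_iff: "0 \<le> x \<longleftrightarrow> 0 \<le> fst x \<and> 0 \<le> snd x"
  by (simp add: less_eq_prod_def)

lemma transfer_Pair [simp]:
  "transfer a1 a2 (x1, x2) (d1, d2) = (x1 - d1 + a2 * d2, x2 - d2 + a1 * d1)"
  by (simp add: transfer_def)

lemma transfer_transfer: "transfer a1 a2 (transfer a1 a2 x d) e = transfer a1 a2 x (d + e)"
  by (simp add: transfer_def algebra_simps)

lemma transfer_shift: "transfer a1 a2 (x + c) d = transfer a1 a2 x d + c"
  by (simp add: transfer_def prod_eq_iff)

lemma transfer_mono: "x \<le> y \<Longrightarrow> transfer a1 a2 x d \<le> transfer a1 a2 y d"
  by (simp add: transfer_def less_eq_prod_def)

lemma transfer_lossless_sum:
  "fst (transfer 1 1 x d) + snd (transfer 1 1 x d) = fst x + snd x"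
  by (simp add: transfer_def)

lemma covers_Pair:
  "covers a1 a2 (x1, x2) (s1, s2) \<longleftrightarrow>
     (\<exists>w1 w2. 0 \<le> w1 \<and> 0 \<le> w2 \<and> s1 \<le> x1 - w1 + a2 * w2 \<and> s2 \<le> x2 - w2 + a1 * w1)"
  by (auto simp: covers_def nonneg_prod_iff)

lemma covers_if_le: "s \<le> x \<Longrightarrow> covers a1 a2 x s"
  unfolding covers_def by (intro exI[of _ 0]) (simp add: transfer_def)

lemma covers_step:
  assumes "covers a1 a2 x s" "0 \<le> d"
  shows "covers a1 a2 (x + c) (transfer a1 a2 (s + c) d)"
proof -
  obtain w where w: "0 \<le> w" "s \<le> transfer a1 a2 x w"
    using assms(1) unfolding covers_def by blast
  have "transfer a1 a2 (s + c) d \<le> transfer a1 a2 (transfer a1 a2 x w + c) d"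
    using w(2) by (intro transfer_mono) (simp add: less_eq_prod_def)
  also have "\<dots> = transfer a1 a2 (x + c) (w + d)"
    by (simp add: transfer_shift transfer_transfer)
  finally show ?thesis
    unfolding covers_def using w(1) assms(2) by (intro exI[of _ "w + d"]) (simp add: nonneg_prod_iff)
qed

lemma covers_swap: "covers a1 a2 (x1, x2) (s1, s2) \<longleftrightarrow> covers a2 a1 (x2, x1) (s2, s1)"
  unfolding covers_Pair by blast

lemma mult_mult_le_self:
  fixes a b x :: real
  assumes "0 \<le> a" "a \<le> 1" "0 \<le> b" "b \<le> 1" "0 \<le> x"
  shows "a * (b * x) \<le> x"
  using assms by (metis mult_left_le_one_le mult_nonneg_nonneg order_trans)

section \<open>One slot of the procrastinating policy\<close>

(* The junk value - y / 0 = 0 never matters: a deficit that can be covered at all forces the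
   efficiency of the sender to be positive. *)
definition deficit_transfer :: "real \<Rightarrow> real \<Rightarrow> real \<times> real \<Rightarrow> real \<times> real" where
  "deficit_transfer a1 a2 y =
     (if fst y < 0 then (0, - fst y / a2) else if snd y < 0 then (- snd y / a1, 0) else 0)"

lemma deficit_transfer_nonneg: "0 \<le> a1 \<Longrightarrow> 0 \<le> a2 \<Longrightarrow> 0 \<le> deficit_transfer a1 a2 y"
  by (simp add: deficit_transfer_def nonneg_prod_iff divide_nonpos_nonneg)

lemma deficit_transfer_exclusive: "fst (deficit_transfer a1 a2 y) * snd (deficit_transfer a1 a2 y) = 0"
  by (simp add: deficit_transfer_def)

lemma deficit_transfer_le_consumption:
  assumes "0 \<le> L" "0 \<le> e" "0 \<le> q"
  shows "a2 * snd (deficit_transfer a1 a2 (L + (e - q))) \<le> fst q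
    \<and> a1 * fst (deficit_transfer a1 a2 (L + (e - q))) \<le> snd q"
  using assms by (auto simp: deficit_transfer_def nonneg_prod_iff)

lemma deficit_one_side_covers:
  assumes a: "0 \<le> a1" "a1 \<le> 1" "0 \<le> a2" "a2 \<le> 1"
    and s: "0 \<le> s1" "0 \<le> s2"
    and y1: "y1 < 0"
    and cov: "covers a1 a2 (y1, y2) (s1, s2)"
  defines "u \<equiv> transfer a1 a2 (y1, y2) (0, - y1 / a2)"
  shows "0 \<le> u \<and> covers a1 a2 u (s1, s2)"
proof -
  obtain w1 w2 where w: "0 \<le> w1" "0 \<le> w2" "s1 \<le> y1 - w1 + a2 * w2" "s2 \<le> y2 - w2 + a1 * w1"
    using cov unfolding covers_Pair by blast
  have "0 < a2 * w2" using w s y1 by linarith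
  then have "0 < a2" using a(3) by (cases "a2 = 0") auto
  define g where "g = - y1 / a2"
  have u: "u = (0, y2 - g)" using \<open>0 < a2\<close> by (simp add: u_def g_def)
  have w2g: "0 \<le> w2 - g" using \<open>0 < a2\<close> w(1,3) s(1) by (simp add: g_def field_simps)
  have "w1 \<le> a2 * (w2 - g)" using \<open>0 < a2\<close> w(3) s(1) by (simp add: g_def algebra_simps)
  then have "a1 * w1 \<le> a1 * (a2 * (w2 - g))" using a(1) by (rule mult_left_mono)
  also have "\<dots> \<le> w2 - g" using a w2g by (rule mult_mult_le_self)
  finally have "0 \<le> y2 - g" using w(4) s(2) by linarith
  moreover have "covers a1 a2 u (s1, s2)"
    unfolding u covers_Pair using w w2g \<open>0 < a2\<close>
    by (intro exI[of _ w1] exI[of _ "w2 - g"]) (simp add: g_def algebra_simps)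
  ultimately show ?thesis by (simp add: u nonneg_prod_iff)
qed

lemma deficit_transfer_covers:
  assumes a: "0 \<le> a1" "a1 \<le> 1" "0 \<le> a2" "a2 \<le> 1"
    and s: "0 \<le> s" and cov: "covers a1 a2 y s"
  defines "u \<equiv> transfer a1 a2 y (deficit_transfer a1 a2 y)"
  shows "0 \<le> u \<and> covers a1 a2 u s"
proof -
  obtain y1 y2 s1 s2 where ys: "y = (y1, y2)" "s = (s1, s2)" by fastforce
  have s12: "0 \<le> s1" "0 \<le> s2" using s by (simp_all add: ys nonneg_prod_iff)
  consider "y1 < 0" | "0 \<le> y1" "y2 < 0" | "0 \<le> y1" "0 \<le> y2" by linarith
  then show ?thesis
  proof cases
    case 1
    then show ?thesis
      using deficit_one_side_covers[OF a s12 1] cov by (simp add: u_def ys deficit_transfer_def)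
  next
    case 2
    have "covers a2 a1 (y2, y1) (s2, s1)" using cov by (simp add: ys covers_swap)
    from deficit_one_side_covers[OF a(3,4,1,2) s12(2,1) 2(2) this] 2
    show ?thesis
      by (simp add: u_def ys deficit_transfer_def nonneg_prod_iff covers_swap[of a1 a2 _ _ s1])
  next
    case 3
    then show ?thesis using cov by (simp add: u_def ys deficit_transfer_def transfer_def nonneg_prod_iff)
  qed
qed

(* The last branch solves transfer a1 a2 u e = M; its denominator is positive there by
   overflow_both_full_solvable. *)
definition overflow_transfer :: "real \<Rightarrow> real \<Rightarrow> real \<times> real \<Rightarrow> real \<times> real \<Rightarrow> real \<times> real" where
  "overflow_transfer a1 a2 M u =
     (let A = fst u - fst M; B = snd u - snd M in
      if A \<le> 0 \<and> B \<le> 0 then 0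
      else if 0 < A \<and> B + a1 * A \<le> 0 then (A, 0)
      else if 0 < B \<and> A + a2 * B \<le> 0 then (0, B)
      else ((A + a2 * B) / (1 - a1 * a2), (B + a1 * A) / (1 - a1 * a2)))"

lemma overflow_one_side_fills:
  assumes a: "0 \<le> a1" "0 \<le> a2"
    and u2: "0 \<le> u2" and s1: "0 \<le> s1" "s1 \<le> M1"
    and cov: "covers a1 a2 (u1, u2) (s1, s2)"
    and excess: "0 < u1 - M1" "u2 - M2 + a1 * (u1 - M1) \<le> 0"
  defines "T \<equiv> transfer a1 a2 (u1, u2) (u1 - M1, 0)"
  shows "0 \<le> T \<and> T \<le> (M1, M2) \<and> fst T = M1 \<and> covers a1 a2 T (s1, s2)"
proof -
  define A where "A = u1 - M1"
  have T: "T = (M1, u2 + a1 * A)" by (simp add: T_def A_def)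
  obtain w1 w2 where w: "0 \<le> w1" "0 \<le> w2" "s1 \<le> u1 - w1 + a2 * w2" "s2 \<le> u2 - w2 + a1 * w1"
    using cov unfolding covers_Pair by blast
  have "covers a1 a2 T (s1, s2)"
  proof (cases "A \<le> w1")
    case True
    then show ?thesis unfolding T covers_Pair using w
      by (intro exI[of _ "w1 - A"] exI[of _ w2]) (simp add: A_def algebra_simps)
  next
    case False
    then have "a1 * w1 \<le> a1 * A" using a(1) by (simp add: mult_left_mono)
    then show ?thesis unfolding T covers_Pair using w a(2) s1
      by (intro exI[of _ 0] exI[of _ w2]) (simp add: A_def)
  qed
  moreover have "0 \<le> a1 * A" using a(1) excess(1) by (simp add: A_def)
  ultimately show ?thesis using excess u2 s1 by (simp add: T A_def nonneg_prod_iff)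
qed

lemma overflow_both_full_solvable:
  fixes A B a1 a2 :: real
  assumes a: "0 \<le> a1" "a1 \<le> 1" "0 \<le> a2" "a2 \<le> 1"
    and branch: "\<not> (A \<le> 0 \<and> B \<le> 0)" "\<not> (0 < A \<and> B + a1 * A \<le> 0)"
      "\<not> (0 < B \<and> A + a2 * B \<le> 0)"
    and lossless: "a1 = 1 \<and> a2 = 1 \<longrightarrow> A + B \<le> 0"
  shows "a1 * a2 < 1 \<and> 0 \<le> A + a2 * B \<and> 0 \<le> B + a1 * A"
proof (intro conjI)
  show "a1 * a2 < 1"
  proof (rule ccontr)
    assume "\<not> a1 * a2 < 1"
    then have "a1 = 1 \<and> a2 = 1"
      using a mult_left_le_one_le[of a2 a1] mult_left_le[of a2 a1] by linarith
    then show False using branch lossless by auto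
  qed
  show "0 \<le> A + a2 * B"
  proof (cases "0 < A")
    case True
    then have "0 \<le> a2 * (B + a1 * A)" using branch(2) a(3) by simp
    moreover have "a2 * (a1 * A) \<le> A" using mult_mult_le_self a True by simp
    ultimately show ?thesis by (simp add: algebra_simps)
  qed (use branch in auto)
  show "0 \<le> B + a1 * A"
  proof (cases "0 < B")
    case True
    then have "0 \<le> a1 * (A + a2 * B)" using branch(3) a(1) by simp
    moreover have "a1 * (a2 * B) \<le> B" using mult_mult_le_self a True by simp
    ultimately show ?thesis by (simp add: algebra_simps)
  qed (use branch in auto)
qed

lemma overflow_transfer_fills:
  assumes a: "0 \<le> a1" "a1 \<le> 1" "0 \<le> a2" "a2 \<le> 1"
    and u: "0 \<le> u" and s: "0 \<le> s" "s \<le> M" and cov: "covers a1 a2 u s"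
    and lossless: "a1 = 1 \<and> a2 = 1 \<longrightarrow> fst u + snd u \<le> fst M + snd M"
  defines "e \<equiv> overflow_transfer a1 a2 M u"
  defines "T \<equiv> transfer a1 a2 u e"
  shows "0 \<le> e \<and> 0 \<le> T \<and> T \<le> M \<and> fst e * (fst M - fst T) = 0 \<and> snd e * (snd M - snd T) = 0
    \<and> covers a1 a2 T s"
proof -
  obtain u1 u2 s1 s2 M1 M2 where P: "u = (u1, u2)" "s = (s1, s2)" "M = (M1, M2)"
    by (metis prod.exhaust)
  have u12: "0 \<le> u1" "0 \<le> u2" and s12: "0 \<le> s1" "s1 \<le> M1" "0 \<le> s2" "s2 \<le> M2"
    using u s by (simp_all add: P nonneg_prod_iff)
  have cov': "covers a2 a1 (u2, u1) (s2, s1)" using cov by (simp add: P covers_swap)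
  define A where "A = u1 - M1"
  define B where "B = u2 - M2"
  have e: "e = (if A \<le> 0 \<and> B \<le> 0 then 0
      else if 0 < A \<and> B + a1 * A \<le> 0 then (A, 0)
      else if 0 < B \<and> A + a2 * B \<le> 0 then (0, B)
      else ((A + a2 * B) / (1 - a1 * a2), (B + a1 * A) / (1 - a1 * a2)))"
    unfolding e_def overflow_transfer_def P A_def B_def Let_def by simp
  consider (none) "A \<le> 0 \<and> B \<le> 0"
    | (first) "\<not> (A \<le> 0 \<and> B \<le> 0)" "0 < A \<and> B + a1 * A \<le> 0"
    | (second) "\<not> (A \<le> 0 \<and> B \<le> 0)" "\<not> (0 < A \<and> B + a1 * A \<le> 0)" "0 < B \<and> A + a2 * B \<le> 0"
    | (both) "\<not> (A \<le> 0 \<and> B \<le> 0)" "\<not> (0 < A \<and> B + a1 * A \<le> 0)" "\<not> (0 < B \<and> A + a2 * B \<le> 0)"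
    by blast
  then show ?thesis
  proof cases
    case none
    then show ?thesis using u cov by (simp add: e T_def P A_def B_def transfer_def)
  next
    case first
    then have "e = (A, 0)" by (simp add: e)
    then show ?thesis
      using first overflow_one_side_fills[where ?M2.0 = M2, OF a(1,3) u12(2) s12(1,2) cov[unfolded P]]
      by (simp add: T_def P A_def B_def nonneg_prod_iff)
  next
    case second
    then have "e = (0, B)" by (simp add: e)
    then show ?thesis
      using second overflow_one_side_fills[where ?M2.0 = M1, OF a(3,1) u12(1) s12(3,4) cov']
      by (simp add: T_def P A_def B_def nonneg_prod_iff covers_swap[of a1 a2 _ _ s1])
  next
    case both
    have "a1 = 1 \<and> a2 = 1 \<longrightarrow> A + B \<le> 0" using lossless by (auto simp: P A_def B_def)
    then have D: "a1 * a2 < 1" and N: "0 \<le> A + a2 * B" "0 \<le> B + a1 * A"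
      using overflow_both_full_solvable[OF a both] by auto
    have E: "e = ((A + a2 * B) / (1 - a1 * a2), (B + a1 * A) / (1 - a1 * a2))"
      unfolding e if_not_P[OF both(1)] if_not_P[OF both(2)] if_not_P[OF both(3)] ..
    have "1 - a1 * a2 \<noteq> 0" using D by simp
    then have "T = (u1 - A, u2 - B)"
      by (simp add: T_def E P divide_simps) (simp add: algebra_simps)
    then have "T = M" by (simp add: P A_def B_def)
    then show ?thesis using D N s12 covers_if_le[OF s(2)] by (simp add: E P nonneg_prod_iff)
  qed
qed

(* The lossless clause cannot be dropped: for a1 = a2 = 1, covering alone does not prevent both
   batteries from overflowing at once. *)
definition dominates :: "real \<Rightarrow> real \<Rightarrow> real \<times> real \<Rightarrow> real \<times> real \<Rightarrow> bool" where
  "dominates a1 a2 L S \<longleftrightarrow>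
     0 \<le> L \<and> covers a1 a2 L S \<and> (a1 = 1 \<and> a2 = 1 \<longrightarrow> fst L + snd L = fst S + snd S)"

lemma procrastinating_step:
  assumes a: "0 \<le> a1" "a1 \<le> 1" "0 \<le> a2" "a2 \<le> 1"
    and dom: "dominates a1 a2 L S" and d: "0 \<le> d"
    and S': "0 \<le> transfer a1 a2 (S + c) d" "transfer a1 a2 (S + c) d \<le> M"
  defines "y \<equiv> L + c"
  defines "g \<equiv> deficit_transfer a1 a2 y"
  defines "u \<equiv> transfer a1 a2 y g"
  defines "e \<equiv> overflow_transfer a1 a2 M u"
  defines "L' \<equiv> transfer a1 a2 u e"
  shows "0 \<le> g \<and> 0 \<le> e \<and> L' \<le> M \<and> fst e * (fst M - fst L') = 0 \<and> snd e * (snd M - snd L') = 0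
    \<and> dominates a1 a2 L' (transfer a1 a2 (S + c) d)"
proof -
  let ?S' = "transfer a1 a2 (S + c) d"
  have "covers a1 a2 y ?S'" using dom d covers_step by (auto simp: dominates_def y_def)
  then have u: "0 \<le> u" "covers a1 a2 u ?S'"
    using deficit_transfer_covers[OF a S'(1)] by (simp_all add: u_def g_def)
  have lossless_u: "a1 = 1 \<and> a2 = 1 \<longrightarrow> fst u + snd u = fst ?S' + snd ?S'"
    using dom transfer_lossless_sum[of u] by (auto simp: dominates_def u_def y_def transfer_def)
  then have "a1 = 1 \<and> a2 = 1 \<longrightarrow> fst u + snd u \<le> fst M + snd M"
    using S'(2) by (auto simp: less_eq_prod_def)
  then have "0 \<le> e \<and> 0 \<le> L' \<and> L' \<le> M \<and> fst e * (fst M - fst L') = 0 \<and> snd e * (snd M - snd L') = 0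
      \<and> covers a1 a2 L' ?S'"
    using overflow_transfer_fills[OF a u(1) S' u(2)] by (simp add: e_def L'_def)
  moreover have "a1 = 1 \<and> a2 = 1 \<longrightarrow> fst L' + snd L' = fst ?S' + snd ?S'"
    using lossless_u by (auto simp: L'_def transfer_def)
  ultimately show ?thesis
    using deficit_transfer_nonneg a by (simp add: g_def dominates_def)
qed

section \<open>The procrastinating policy over all slots\<close>

(* Slots are numbered from 1; the values at slot 0 are junk. *)
context
  fixes a1 a2 :: real and M :: "real \<times> real" and net :: "nat \<Rightarrow> real \<times> real"
begin

fun procrastinating_level :: "nat \<Rightarrow> real \<times> real" where
  "procrastinating_level 0 = 0"
| "procrastinating_level (Suc i) =
     (let y = procrastinating_level i + net (Suc i); u = transfer a1 a2 y (deficit_transfer a1 a2 y)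
      in transfer a1 a2 u (overflow_transfer a1 a2 M u))"

definition procrastinating_gamma :: "nat \<Rightarrow> real \<times> real" where
  "procrastinating_gamma i = deficit_transfer a1 a2 (procrastinating_level (i - 1) + net i)"

definition procrastinating_eps :: "nat \<Rightarrow> real \<times> real" where
  "procrastinating_eps i =
     overflow_transfer a1 a2 M
       (transfer a1 a2 (procrastinating_level (i - 1) + net i) (procrastinating_gamma i))"

lemma procrastinating_level_Suc:
  "procrastinating_level (Suc i) =
     transfer a1 a2 (procrastinating_level i + net (Suc i))
       (procrastinating_gamma (Suc i) + procrastinating_eps (Suc i))"
  by (simp add: procrastinating_gamma_def procrastinating_eps_def Let_def transfer_transfer)

context
  fixes N :: nat and S d :: "nat \<Rightarrow> real \<times> real"
  assumes a: "0 \<le> a1" "a1 \<le> 1" "0 \<le> a2" "a2 \<le> 1"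
    and S_0: "S 0 = 0"
    and S_Suc: "\<And>i. S (Suc i) = transfer a1 a2 (S i + net (Suc i)) (d (Suc i))"
    and d_nonneg: "\<And>i. i < N \<Longrightarrow> 0 \<le> d (Suc i)"
    and S_bounds: "\<And>i. i < N \<Longrightarrow> 0 \<le> S (Suc i) \<and> S (Suc i) \<le> M"
begin

lemma procrastinating_slot:
  assumes "dominates a1 a2 (procrastinating_level i) (S i)" "i < N"
  shows "0 \<le> procrastinating_gamma (Suc i) \<and> 0 \<le> procrastinating_eps (Suc i)
    \<and> procrastinating_level (Suc i) \<le> M
    \<and> fst (procrastinating_eps (Suc i)) * (fst M - fst (procrastinating_level (Suc i))) = 0
    \<and> snd (procrastinating_eps (Suc i)) * (snd M - snd (procrastinating_level (Suc i))) = 0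
    \<and> dominates a1 a2 (procrastinating_level (Suc i)) (S (Suc i))"
  using procrastinating_step[OF a assms(1) d_nonneg[OF assms(2)], of "net (Suc i)" M]
    S_bounds[OF assms(2)]
  by (simp add: S_Suc procrastinating_gamma_def procrastinating_eps_def Let_def)

lemma procrastinating_level_dominates:
  "i \<le> N \<Longrightarrow> dominates a1 a2 (procrastinating_level i) (S i)"
proof (induction i)
  case 0
  then show ?case by (simp add: S_0 dominates_def covers_if_le)
next
  case (Suc i)
  then show ?case using procrastinating_slot[of i] by simp
qed

end

end

section \<open>Back to the node-indexed formulation\<close>

definition slot :: "(nat \<Rightarrow> nat \<Rightarrow> real) \<Rightarrow> nat \<Rightarrow> real \<times> real" where
  "slot f i = (f 1 i, f 2 i)"

(* Every node index other than 1 is read as node 2. *)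
definition unslot :: "(nat \<Rightarrow> real \<times> real) \<Rightarrow> nat \<Rightarrow> nat \<Rightarrow> real" where
  "unslot v k i = (if k = 1 then fst (v i) else snd (v i))"

lemma ball_nodes_slots:
  "(\<forall>k \<in> {1,2}. \<forall>i \<in> {1..N}. P k i) \<longleftrightarrow> (\<forall>j < N. P 1 (Suc j) \<and> P (2::nat) (Suc j))"
  unfolding image_Suc_lessThan[symmetric] by auto

lemma battery_slot_0: "slot (battery alpha E p delta) 0 = 0"
  by (simp add: slot_def battery_def zero_prod_def)

lemma battery_slot_Suc:
  "slot (battery alpha E p delta) (Suc i) =
     transfer (alpha 1) (alpha 2) (slot (battery alpha E p delta) i + (slot E (Suc i) - slot p (Suc i)))
       (slot delta (Suc i))"
  by (simp add: slot_def battery_def other_def)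


lemma feasible_iff_slots:
  "feasible N alpha E Emax p delta \<longleftrightarrow>
     (\<forall>j < N. 0 \<le> slot (battery alpha E p delta) (Suc j) \<and>
        slot (battery alpha E p delta) (Suc j) \<le> (Emax 1, Emax 2) \<and>
        0 \<le> slot p (Suc j) \<and> 0 \<le> slot delta (Suc j))"
  unfolding feasible_def ball_nodes_slots by (auto simp: slot_def nonneg_prod_iff)

lemma slot_unslot [simp]: "slot (unslot v) = v"
  by (simp add: slot_def unslot_def fun_eq_iff)

lemma unslot_add: "unslot (\<lambda>i. v i + w i) = (\<lambda>k i. unslot v k i + unslot w k i)"
  by (simp add: unslot_def fun_eq_iff)

lemma battery_procrastinating:
  fixes E p :: "nat \<Rightarrow> nat \<Rightarrow> real"
  defines "net \<equiv> \<lambda>i. slot E i - slot p i"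
  shows "slot (battery alpha E p (unslot (\<lambda>i. procrastinating_gamma (alpha 1) (alpha 2) M net i
             + procrastinating_eps (alpha 1) (alpha 2) M net i))) i
           = procrastinating_level (alpha 1) (alpha 2) M net i"
proof (induction i)
  case (Suc i)
  then show ?case
    unfolding battery_slot_Suc procrastinating_level_Suc by (simp add: net_def)
qed (simp add: battery_slot_0)

lemma feasible_policy_procrastinates:
  assumes a: "0 \<le> alpha 1" "alpha 1 \<le> 1" "0 \<le> alpha 2" "alpha 2 \<le> 1"
    and E_nonneg: "\<forall>k \<in> {1,2}. \<forall>i \<in> {1..N}. 0 \<le> E k i"
    and feas: "feasible N alpha E Emax p delta"
  shows "\<exists>gamma eps. feasible N alpha E Emax p (\<lambda>k i. gamma k i + eps k i)
           \<and> partially_procrastinating N alpha E Emax p gamma eps"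
proof -
  define M where "M = (Emax 1, Emax 2)"
  define net where "net = (\<lambda>i. slot E i - slot p i)"
  define L where "L = procrastinating_level (alpha 1) (alpha 2) M net"
  define G where "G = procrastinating_gamma (alpha 1) (alpha 2) M net"
  define Ep where "Ep = procrastinating_eps (alpha 1) (alpha 2) M net"
  have S_bounds: "0 \<le> slot (battery alpha E p delta) (Suc j)
      \<and> slot (battery alpha E p delta) (Suc j) \<le> M"
    and p_nonneg: "0 \<le> slot p (Suc j)" and d_nonneg: "0 \<le> slot delta (Suc j)" if "j < N" for j
    using feas that unfolding feasible_iff_slots M_def by blast+
  have S_Suc: "slot (battery alpha E p delta) (Suc i) =
      transfer (alpha 1) (alpha 2) (slot (battery alpha E p delta) i + net (Suc i)) (slot delta (Suc i))"
    for i by (simp add: battery_slot_Suc net_def)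
  note trajectory = battery_slot_0 S_Suc d_nonneg S_bounds
  have dom: "dominates (alpha 1) (alpha 2) (L j) (slot (battery alpha E p delta) j)" if "j \<le> N" for j
    using procrastinating_level_dominates[OF a trajectory that] by (simp add: L_def)
  have slot_facts: "0 \<le> G (Suc j) \<and> 0 \<le> Ep (Suc j) \<and> L (Suc j) \<le> M
    \<and> fst (Ep (Suc j)) * (fst M - fst (L (Suc j))) = 0
    \<and> snd (Ep (Suc j)) * (snd M - snd (L (Suc j))) = 0
    \<and> alpha 2 * snd (G (Suc j)) \<le> p 1 (Suc j) \<and> alpha 1 * fst (G (Suc j)) \<le> p 2 (Suc j)"
    if "j < N" for j
  proof -
    have "0 \<le> L j" using dom[of j] that by (simp add: dominates_def)
    moreover have "0 \<le> slot E (Suc j)" using E_nonneg that by (simp add: slot_def nonneg_prod_iff)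
    ultimately show ?thesis
      using procrastinating_slot[OF a trajectory dom[unfolded L_def]] that p_nonneg[OF that]
        deficit_transfer_le_consumption[of "L j" "slot E (Suc j)" "slot p (Suc j)" "alpha 2" "alpha 1"]
      by (simp add: L_def G_def Ep_def procrastinating_gamma_def net_def slot_def)
  qed
  have bat: "slot (battery alpha E p (\<lambda>k i. unslot G k i + unslot Ep k i)) i = L i" for i
    using battery_procrastinating[where E = E and p = p and alpha = alpha and M = M and i = i,
        folded net_def]
    by (simp add: L_def G_def Ep_def unslot_add)
  then have bat_k: "battery alpha E p (\<lambda>k i. unslot G k i + unslot Ep k i) 1 i = fst (L i)"
    "battery alpha E p (\<lambda>k i. unslot G k i + unslot Ep k i) 2 i = snd (L i)" for i
    by (metis fst_conv slot_def, metis snd_conv slot_def)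
  have "feasible N alpha E Emax p (\<lambda>k i. unslot G k i + unslot Ep k i)"
    unfolding feasible_iff_slots bat using slot_facts dom p_nonneg
    by (simp add: slot_def M_def unslot_def dominates_def nonneg_prod_iff)
  moreover have "partially_procrastinating N alpha E Emax p (unslot G) (unslot Ep)"
    unfolding partially_procrastinating_def ball_nodes_slots bat_k
    using slot_facts deficit_transfer_exclusive
    by (simp add: other_def unslot_def M_def G_def procrastinating_gamma_def nonneg_prod_iff)
  ultimately show ?thesis by blast
qed

theorem lemma4:
  fixes N :: nat
    and h sigma alpha Emax :: "nat \<Rightarrow> real"
    and E :: "nat \<Rightarrow> nat \<Rightarrow> real"
  assumes h_pos: "h 1 > 0" "h 2 > 0"
    and sigma_pos: "(sigma 1)^2 > 0" "(sigma 2)^2 > 0"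
    and alpha_range: "0 \<le> alpha 1" "alpha 1 \<le> 1" "0 \<le> alpha 2" "alpha 2 \<le> 1"
    and E_nonneg: "\<forall>k \<in> {1,2}. \<forall>i \<in> {1..N}. 0 \<le> E k i"
    and Emax_pos: "Emax 1 > 0" "Emax 2 > 0"
    and has_opt: "\<exists>p delta. optimal N h sigma alpha E Emax p delta"
  shows "\<exists>p delta gamma eps.
           optimal N h sigma alpha E Emax p delta \<and>
           (\<forall>k \<in> {1,2}. \<forall>i \<in> {1..N}. delta k i = gamma k i + eps k i) \<and>
           partially_procrastinating N alpha E Emax p gamma eps"
proof -
  obtain p delta where opt: "optimal N h sigma alpha E Emax p delta"
    using has_opt by blast
  then have "feasible N alpha E Emax p delta" by (simp add: optimal_def)
  then obtain gamma eps where
    feas: "feasible N alpha E Emax p (\<lambda>k i. gamma k i + eps k i)" and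
    pp: "partially_procrastinating N alpha E Emax p gamma eps"
    using feasible_policy_procrastinates[OF alpha_range E_nonneg] by blast
  have "optimal N h sigma alpha E Emax p (\<lambda>k i. gamma k i + eps k i)"
    using opt feas by (simp add: optimal_def)
  then show ?thesis using pp by blast
qed

end
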